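(* Let $1\le\beta<\sqrt{5/3}$, and let $\sigma,\sigma_0:[n]\to[K]$ be assignments all of whose community sizes lie in $[\frac{n}{\beta K},\frac{\beta n}{K}]$, with $d(\sigma,\sigma_0)=m$ for an integer $0<m<n$. Then $$\alpha(\sigma;\sigma_0)\wedge\gamma(\sigma;\sigma_0)\ge\begin{cases}\frac{nm}{K\beta}-m^2, & m\le\frac{n}{2K},\\ \frac{c_\beta nm}{K}, & m>\frac n{2K},\end{cases}\qquad c_\beta=\frac{(5-3\beta^2)^2}{2\beta(1+3(5-3\beta^2)^2)}.$$
   Context: $d(\sigma_1,\sigma_2)=\min_\delta d_H(\sigma_1,\delta\circ\sigma_2)$ over permutations $\delta$ of $[K]$, $d_H$ the Hamming distance. $\alpha(\sigma;\sigma_0)=|\{(i,j):i<j,\ \sigma_0(i)=\sigma_0(j),\ \sigma(i)\ne\sigma(j)\}|$ and $\gamma(\sigma;\sigma_0)=|\{(i,j):i<j,\ \sigma_0(i)\ne\sigma_0(j),\ \sigma(i)=\sigma(j)\}|$. *)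

theory Defs
  imports "HOL-Analysis.Analysis" "HOL-Combinatorics.Permutations"
begin

definition is_assignment :: "nat \<Rightarrow> nat \<Rightarrow> (nat \<Rightarrow> nat) \<Rightarrow> bool" where
  "is_assignment n K \<sigma> \<longleftrightarrow> (\<forall>i<n. \<sigma> i < K)"

definition hamming :: "nat \<Rightarrow> (nat \<Rightarrow> nat) \<Rightarrow> (nat \<Rightarrow> nat) \<Rightarrow> nat" where
  "hamming n \<sigma>1 \<sigma>2 = card {i. i < n \<and> \<sigma>1 i \<noteq> \<sigma>2 i}"

definition perm_dist :: "nat \<Rightarrow> nat \<Rightarrow> (nat \<Rightarrow> nat) \<Rightarrow> (nat \<Rightarrow> nat) \<Rightarrow> nat" where
  "perm_dist n K \<sigma>1 \<sigma>2 = Min {hamming n \<sigma>1 (\<delta> \<circ> \<sigma>2) | \<delta>. \<delta> permutes {0..<K}}"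

definition comm_size :: "nat \<Rightarrow> (nat \<Rightarrow> nat) \<Rightarrow> nat \<Rightarrow> nat" where
  "comm_size n \<sigma> k = card {i. i < n \<and> \<sigma> i = k}"

definition alpha_cnt :: "nat \<Rightarrow> (nat \<Rightarrow> nat) \<Rightarrow> (nat \<Rightarrow> nat) \<Rightarrow> nat" where
  "alpha_cnt n \<sigma> \<sigma>0 = card {(i, j). i < j \<and> j < n \<and> \<sigma>0 i = \<sigma>0 j \<and> \<sigma> i \<noteq> \<sigma> j}"

definition gamma_cnt :: "nat \<Rightarrow> (nat \<Rightarrow> nat) \<Rightarrow> (nat \<Rightarrow> nat) \<Rightarrow> nat" where
  "gamma_cnt n \<sigma> \<sigma>0 = card {(i, j). i < j \<and> j < n \<and> \<sigma>0 i \<noteq> \<sigma>0 j \<and> \<sigma> i = \<sigma> j}"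

definition c_beta :: "real \<Rightarrow> real" where
  "c_beta \<beta> = (5 - 3 * \<beta>\<^sup>2)\<^sup>2 / (2 * \<beta> * (1 + 3 * (5 - 3 * \<beta>\<^sup>2)\<^sup>2))"

end

theory Submission
  imports Defs
begin

text \<open>Write \<open>N a b\<close> for the number of nodes of true community \<open>a\<close> (under \<open>\<sigma>\<^sub>0\<close>) labelled \<open>b\<close>
  by \<open>\<sigma>\<close>, and \<open>R a\<close> for the size of community \<open>a\<close>. Double counting gives
  \<open>2 \<alpha> = \<Sum>\<^sub>a \<Sum>\<^sub>b N a b (R a - N a b)\<close>; since \<open>\<gamma>(\<sigma>;\<sigma>\<^sub>0) = \<alpha>(\<sigma>\<^sub>0;\<sigma>)\<close> and \<open>d\<close> is symmetric,
  it suffices to bound \<open>\<alpha>\<close>.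

  For the quadratic bound take an optimal relabelling \<open>\<delta>\<close>: row \<open>a\<close> has \<open>E a \<le> m\<close> misplaced nodes
  and contributes at least \<open>2 N a (\<delta> a) E a \<ge> 2 (n/(\<beta>K) - m) E a\<close>.

  For the linear bound let \<open>h a\<close> be a majority label of row \<open>a\<close>, of mass \<open>M a\<close>. Then
  \<open>2 \<alpha> \<ge> \<Sum>\<^sub>a R a (R a - M a) \<ge> n/(\<beta>K) E\<close> with \<open>E = \<Sum>\<^sub>a (R a - M a)\<close>. A permutation agreeing with \<open>h\<close>
  on the rows whose majority label is not shared shows \<open>m \<le> E + X\<close>, where \<open>X\<close> is the majority mass of
  the other rows. Rows sharing a label have total size at least \<open>2n/(\<beta>K)\<close>, while their majority
  masses all land in that label and so sum to at most \<open>\<beta>n/K\<close>; this gives \<open>t X \<le> (1 - t) E\<close> for the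
  \<open>t\<close> with \<open>c\<^sub>\<beta> = t/(2\<beta>)\<close>, hence \<open>t m \<le> E\<close>.\<close>

definition confusion :: "nat \<Rightarrow> (nat \<Rightarrow> nat) \<Rightarrow> (nat \<Rightarrow> nat) \<Rightarrow> nat \<Rightarrow> nat \<Rightarrow> nat" where
  "confusion n \<sigma> \<sigma>0 a b = card {i. i < n \<and> \<sigma>0 i = a \<and> \<sigma> i = b}"

lemma card_eq_sum_card_fibres:
  assumes "\<forall>i<(n::nat). g i < (K::nat)"
  shows "card {i. i < n \<and> P i} = (\<Sum>a<K. card {i. i < n \<and> g i = a \<and> P i})"
proof -
  have "{i. i < n \<and> P i} = (\<Union>a<K. {i. i < n \<and> g i = a \<and> P i})"
    using assms by auto
  also have "card \<dots> = (\<Sum>a<K. card {i. i < n \<and> g i = a \<and> P i})"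
    by (rule card_UN_disjoint) auto
  finally show ?thesis .
qed

lemma sum_confusion_row:
  assumes "is_assignment n K \<sigma>"
  shows "(\<Sum>b<K. confusion n \<sigma> \<sigma>0 a b) = comm_size n \<sigma>0 a"
  using card_eq_sum_card_fibres[of n \<sigma> K "\<lambda>i. \<sigma>0 i = a"] assms
  unfolding confusion_def comm_size_def is_assignment_def by (simp add: conj_commute)

lemma sum_confusion_col:
  assumes "is_assignment n K \<sigma>0"
  shows "(\<Sum>a<K. confusion n \<sigma> \<sigma>0 a b) = comm_size n \<sigma> b"
  using card_eq_sum_card_fibres[of n \<sigma>0 K "\<lambda>i. \<sigma> i = b"] assms
  unfolding confusion_def comm_size_def is_assignment_def by simp

lemma sum_confusion_col_le:
  assumes "is_assignment n K \<sigma>0" "A \<subseteq> {..<K}"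
  shows "(\<Sum>a\<in>A. confusion n \<sigma> \<sigma>0 a b) \<le> comm_size n \<sigma> b"
proof -
  have "(\<Sum>a\<in>A. confusion n \<sigma> \<sigma>0 a b) \<le> (\<Sum>a<K. confusion n \<sigma> \<sigma>0 a b)"
    using assms(2) by (intro sum_mono2) auto
  then show ?thesis
    by (simp add: sum_confusion_col[OF assms(1)])
qed

lemma confusion_le_comm_size: "confusion n \<sigma> \<sigma>0 a b \<le> comm_size n \<sigma>0 a"
  unfolding confusion_def comm_size_def by (intro card_mono) auto

lemma of_nat_card_disagree:
  "real (card {i. i < n \<and> \<sigma>0 i = a \<and> \<sigma> i \<noteq> b}) = real (comm_size n \<sigma>0 a) - real (confusion n \<sigma> \<sigma>0 a b)"
proof -
  have "{i. i < n \<and> \<sigma>0 i = a} = {i. i < n \<and> \<sigma>0 i = a \<and> \<sigma> i \<noteq> b} \<union> {i. i < n \<and> \<sigma>0 i = a \<and> \<sigma> i = b}"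
    by auto
  then have "comm_size n \<sigma>0 a = card {i. i < n \<and> \<sigma>0 i = a \<and> \<sigma> i \<noteq> b} + confusion n \<sigma> \<sigma>0 a b"
    unfolding confusion_def comm_size_def by (simp add: card_Un_disjoint disjoint_iff)
  then show ?thesis
    by simp
qed

lemma sum_eq_sum_confusion:
  assumes "is_assignment n K \<sigma>" "is_assignment n K \<sigma>0"
  shows "(\<Sum>i<n. g (\<sigma>0 i) (\<sigma> i)) =
    (\<Sum>a<K. \<Sum>b<K. of_nat (confusion n \<sigma> \<sigma>0 a b) * (g a b :: 'a::comm_semiring_1))"
proof -
  let ?B = "{..<K} \<times> {..<K}" and ?key = "\<lambda>i. (\<sigma>0 i, \<sigma> i)"
  have "(\<Sum>i<n. g (\<sigma>0 i) (\<sigma> i)) = (\<Sum>(a, b)\<in>?B. \<Sum>i\<in>{i\<in>{..<n}. ?key i = (a, b)}. g a b)"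
    using assms unfolding is_assignment_def
    by (subst sum.group[symmetric, of "{..<n}" ?B ?key]) (auto intro!: sum.cong)
  also have "\<dots> = (\<Sum>(a, b)\<in>?B. of_nat (confusion n \<sigma> \<sigma>0 a b) * g a b)"
    unfolding confusion_def by (intro sum.cong refl) (auto simp: conj_assoc)
  finally show ?thesis
    by (simp add: sum.cartesian_product)
qed

lemma alpha_cnt_double_count:
  "2 * alpha_cnt n \<sigma> \<sigma>0 = (\<Sum>i<n. card {j. j < n \<and> \<sigma>0 j = \<sigma>0 i \<and> \<sigma> j \<noteq> \<sigma> i})"
proof -
  define S where "S = {(i, j). i < j \<and> j < n \<and> \<sigma>0 i = \<sigma>0 j \<and> \<sigma> i \<noteq> \<sigma> j}"
  define P where "P = Sigma {..<n} (\<lambda>i. {j. j < n \<and> \<sigma>0 j = \<sigma>0 i \<and> \<sigma> j \<noteq> \<sigma> i})"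
  have "finite S"
    unfolding S_def by (rule finite_subset[of _ "{..<n} \<times> {..<n}"]) auto
  have swap: "prod.swap ` S = {(i, j). j < i \<and> i < n \<and> \<sigma>0 i = \<sigma>0 j \<and> \<sigma> i \<noteq> \<sigma> j}"
    unfolding S_def by (auto simp: image_def)
  have "P = S \<union> prod.swap ` S"
    unfolding swap P_def S_def by (auto simp: not_less le_less)
  moreover have "S \<inter> prod.swap ` S = {}"
    unfolding swap S_def by auto
  ultimately have "card P = 2 * card S"
    using \<open>finite S\<close> by (simp add: card_Un_disjoint card_image)
  moreover have "card P = (\<Sum>i<n. card {j. j < n \<and> \<sigma>0 j = \<sigma>0 i \<and> \<sigma> j \<noteq> \<sigma> i})"
    unfolding P_def by (subst card_SigmaI) auto
  ultimately show ?thesis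
    unfolding alpha_cnt_def S_def by simp
qed

lemma alpha_cnt_eq_sum_confusion:
  assumes "is_assignment n K \<sigma>" "is_assignment n K \<sigma>0"
  shows "2 * real (alpha_cnt n \<sigma> \<sigma>0) = (\<Sum>a<K. \<Sum>b<K.
    real (confusion n \<sigma> \<sigma>0 a b) * (real (comm_size n \<sigma>0 a) - real (confusion n \<sigma> \<sigma>0 a b)))"
proof -
  have "2 * real (alpha_cnt n \<sigma> \<sigma>0) =
      (\<Sum>i<n. real (comm_size n \<sigma>0 (\<sigma>0 i)) - real (confusion n \<sigma> \<sigma>0 (\<sigma>0 i) (\<sigma> i)))"
    using arg_cong[OF alpha_cnt_double_count, of real]
    by (simp add: of_nat_sum of_nat_card_disagree)
  also have "\<dots> = (\<Sum>a<K. \<Sum>b<K.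
      real (confusion n \<sigma> \<sigma>0 a b) * (real (comm_size n \<sigma>0 a) - real (confusion n \<sigma> \<sigma>0 a b)))"
    by (rule sum_eq_sum_confusion[OF assms])
  finally show ?thesis .
qed

lemma hamming_comp_eq_sum_confusion:
  assumes "is_assignment n K \<sigma>0"
  shows "real (hamming n \<sigma> (\<delta> \<circ> \<sigma>0)) =
    (\<Sum>a<K. real (comm_size n \<sigma>0 a) - real (confusion n \<sigma> \<sigma>0 a (\<delta> a)))"
proof -
  have "hamming n \<sigma> (\<delta> \<circ> \<sigma>0) = (\<Sum>a<K. card {i. i < n \<and> \<sigma>0 i = a \<and> \<sigma> i \<noteq> \<delta> (\<sigma>0 i)})"
    using assms unfolding hamming_def is_assignment_def by (simp add: card_eq_sum_card_fibres)
  also have "\<dots> = (\<Sum>a<K. card {i. i < n \<and> \<sigma>0 i = a \<and> \<sigma> i \<noteq> \<delta> a})"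
    by (intro sum.cong refl arg_cong[where f = card]) auto
  finally show ?thesis
    by (simp add: of_nat_sum of_nat_card_disagree)
qed

lemma hamming_comp_permutes_swap:
  assumes "\<delta> permutes A"
  shows "hamming n \<sigma> (\<delta> \<circ> \<sigma>0) = hamming n \<sigma>0 (inv \<delta> \<circ> \<sigma>)"
proof -
  have "\<sigma> i \<noteq> \<delta> (\<sigma>0 i) \<longleftrightarrow> \<sigma>0 i \<noteq> inv \<delta> (\<sigma> i)" for i
    using permutes_inverses[OF assms] by metis
  then show ?thesis
    unfolding hamming_def by simp
qed

lemma perm_dist_commute: "perm_dist n K \<sigma> \<sigma>0 = perm_dist n K \<sigma>0 \<sigma>"
proof -
  have "{hamming n \<sigma> (\<delta> \<circ> \<sigma>0) | \<delta>. \<delta> permutes {0..<K}} = {hamming n \<sigma>0 (\<delta> \<circ> \<sigma>) | \<delta>. \<delta> permutes {0..<K}}"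
    by (auto simp: hamming_comp_permutes_swap intro: permutes_inv)
  then show ?thesis
    unfolding perm_dist_def by simp
qed

lemma finite_hamming_comp_permutes: "finite {hamming n \<sigma> (\<delta> \<circ> \<sigma>0) | \<delta>. \<delta> permutes {0..<K}}"
  using finite_permutations[of "{0..<K}"] by (simp add: setcompr_eq_image)

lemma perm_dist_le_hamming:
  assumes "\<delta> permutes {0..<K}"
  shows "perm_dist n K \<sigma> \<sigma>0 \<le> hamming n \<sigma> (\<delta> \<circ> \<sigma>0)"
  unfolding perm_dist_def using assms by (intro Min_le finite_hamming_comp_permutes) blast

lemma perm_dist_attained:
  obtains \<delta> where "\<delta> permutes {0..<K}" "hamming n \<sigma> (\<delta> \<circ> \<sigma>0) = perm_dist n K \<sigma> \<sigma>0"
proof -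
  have "perm_dist n K \<sigma> \<sigma>0 \<in> {hamming n \<sigma> (\<delta> \<circ> \<sigma>0) | \<delta>. \<delta> permutes {0..<K}}"
    unfolding perm_dist_def using permutes_id by (intro Min_in finite_hamming_comp_permutes) blast
  then show ?thesis
    using that by auto
qed

lemma gamma_cnt_eq_alpha_cnt_swap: "gamma_cnt n \<sigma> \<sigma>0 = alpha_cnt n \<sigma>0 \<sigma>"
  unfolding gamma_cnt_def alpha_cnt_def by (rule arg_cong[where f = card]) auto

lemma sum_mult_sum_minus_ge:
  fixes x :: "'a \<Rightarrow> real"
  assumes "finite B" "c \<in> B" "\<forall>b\<in>B. 0 \<le> x b"
  shows "2 * (x c * (sum x B - x c)) \<le> (\<Sum>b\<in>B. x b * (sum x B - x b))"
proof -
  let ?S = "sum x B"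
  have other_le: "x c \<le> ?S - x b" if "b \<in> B - {c}" for b
  proof -
    have "x b + x c = sum x {b, c}"
      using that by auto
    also have "\<dots> \<le> ?S"
      using assms that by (intro sum_mono2) auto
    finally show ?thesis
      by simp
  qed
  have "(\<Sum>b\<in>B. x b * (?S - x b)) = x c * (?S - x c) + (\<Sum>b\<in>B - {c}. x b * (?S - x b))"
    by (rule sum.remove[OF assms(1,2)])
  moreover have "(\<Sum>b\<in>B - {c}. x b * x c) \<le> (\<Sum>b\<in>B - {c}. x b * (?S - x b))"
    using other_le assms by (intro sum_mono mult_left_mono) auto
  moreover have "(\<Sum>b\<in>B - {c}. x b * x c) = (?S - x c) * x c"
    using assms by (simp add: sum.remove flip: sum_distrib_right)
  ultimately show ?thesis
    by (simp add: algebra_simps)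
qed

lemma card_ge_2_iff_ex_other:
  assumes "finite A" "a \<in> A"
  shows "2 \<le> card A \<longleftrightarrow> (\<exists>a'\<in>A. a' \<noteq> a)"
proof -
  have "2 \<le> card A \<longleftrightarrow> \<not> (\<forall>a1\<in>A. \<forall>a2\<in>A. a1 = a2)"
    using card_le_Suc0_iff_eq[OF assms(1)] by linarith
  also have "\<dots> \<longleftrightarrow> (\<exists>a'\<in>A. a' \<noteq> a)"
    using assms(2) by metis
  finally show ?thesis .
qed

lemma sum_tradeoff_card_ge_2:
  fixes R M :: "'a \<Rightarrow> real"
  assumes "finite A" "2 \<le> card A" "0 \<le> q" "\<forall>a\<in>A. q \<le> R a" "sum M A \<le> u"
    and "0 \<le> t" "t \<le> 1" "t * u \<le> (1 - t) * (2 * q - u)"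
  shows "t * sum M A \<le> (1 - t) * (\<Sum>a\<in>A. R a - M a)"
proof -
  have "2 * q \<le> real (card A) * q"
    using assms by (intro mult_right_mono) auto
  also have "\<dots> \<le> sum R A"
    using assms by (intro sum_bounded_below) auto
  finally have "2 * q \<le> sum R A" .
  have "t * sum M A \<le> t * u"
    using assms by (intro mult_left_mono) auto
  also have "\<dots> \<le> (1 - t) * (2 * q - u)"
    by (fact assms)
  also have "\<dots> \<le> (1 - t) * (sum R A - sum M A)"
    using assms \<open>2 * q \<le> sum R A\<close> by (intro mult_left_mono) auto
  finally show ?thesis
    by (simp add: sum_subtractf)
qed

lemma c_beta_tradeoff:
  fixes \<beta> :: real
  assumes "1 \<le> \<beta>" "\<beta> < sqrt (5/3)"
  obtains t where "0 \<le> t" "t \<le> 1" "t * \<beta> \<le> (1 - t) * (2 / \<beta> - \<beta>)" "c_beta \<beta> = t / (2 * \<beta>)"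
proof
  define s where "s = 5 - 3 * \<beta>\<^sup>2"
  define t where "t = s\<^sup>2 / (1 + 3 * s\<^sup>2)"
  have "\<beta>\<^sup>2 < (sqrt (5/3))\<^sup>2"
    using assms by (intro power_strict_mono) auto
  then have "0 < s"
    unfolding s_def by simp
  have D: "0 < 1 + 3 * s\<^sup>2"
    by (simp add: add_pos_nonneg)
  show "0 \<le> t" "t \<le> 1"
    unfolding t_def using D by simp_all
  show "c_beta \<beta> = t / (2 * \<beta>)"
    unfolding t_def c_beta_def s_def by (simp add: field_simps)
  have three_beta_sq: "3 * \<beta>\<^sup>2 = 5 - s"
    unfolding s_def by simp
  \<comment> \<open>After substituting \<open>3 \<beta>\<^sup>2 = 5 - s\<close> the key inequality is a polynomial one in \<open>s > 0\<close>.\<close>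
  have "(1 + 2 * s\<^sup>2) * (1 + s) - s\<^sup>2 * (5 - s) = 3 * s * (s - 1/2)\<^sup>2 + s/4 + 1"
    by (simp add: power2_eq_square algebra_simps)
  moreover have "0 \<le> 3 * s * (s - 1/2)\<^sup>2"
    using \<open>0 < s\<close> by simp
  ultimately have "s\<^sup>2 * (3 * \<beta>\<^sup>2) \<le> (1 + 2 * s\<^sup>2) * (6 - 3 * \<beta>\<^sup>2)"
    using \<open>0 < s\<close> unfolding three_beta_sq by (simp add: algebra_simps)
  then have "s\<^sup>2 * \<beta>\<^sup>2 \<le> (1 + 2 * s\<^sup>2) * (2 - \<beta>\<^sup>2)"
    by (simp add: algebra_simps)
  then have "s\<^sup>2 * \<beta>\<^sup>2 / (1 + 3 * s\<^sup>2) \<le> (1 + 2 * s\<^sup>2) * (2 - \<beta>\<^sup>2) / (1 + 3 * s\<^sup>2)"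
    using D by (intro divide_right_mono) auto
  moreover have "1 - t = (1 + 2 * s\<^sup>2) / (1 + 3 * s\<^sup>2)"
    unfolding t_def using D by (simp add: field_simps)
  ultimately have "t * \<beta>\<^sup>2 \<le> (1 - t) * (2 - \<beta>\<^sup>2)"
    unfolding t_def by simp
  then show "t * \<beta> \<le> (1 - t) * (2 / \<beta> - \<beta>)"
    using assms(1) by (simp add: field_simps power2_eq_square)
qed

lemma permutes_extend_inj_on:
  assumes "finite A" "S \<subseteq> A" "inj_on h S" "h ` S \<subseteq> A"
  obtains \<delta> where "\<delta> permutes A" "\<forall>a\<in>S. \<delta> a = h a"
proof -
  have "card (A - S) = card (A - h ` S)"
    using assms finite_subset[OF assms(2,1)] by (simp add: card_Diff_subset card_image)
  then obtain g where g: "bij_betw g (A - S) (A - h ` S)"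
    using finite_same_card_bij assms(1) by (metis finite_Diff)
  define \<delta> where "\<delta> = (\<lambda>x. if x \<in> A then (if x \<in> S then h x else g x) else x)"
  have "bij_betw (\<lambda>x. if x \<in> S then h x else g x) (S \<union> (A - S)) (h ` S \<union> (A - h ` S))"
    using assms(3) g by (intro bij_betw_disjoint_Un) (auto simp: inj_on_imp_bij_betw)
  moreover have "S \<union> (A - S) = A" "h ` S \<union> (A - h ` S) = A"
    using assms(2,4) by auto
  ultimately have "bij_betw (\<lambda>x. if x \<in> S then h x else g x) A A"
    by (simp only:)
  then have "bij_betw \<delta> A A"
    by (simp add: \<delta>_def cong: bij_betw_cong)
  then have "\<delta> permutes A"
    by (rule bij_imp_permutes) (simp add: \<delta>_def)
  moreover have "\<forall>a\<in>S. \<delta> a = h a"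
    using assms(2) unfolding \<delta>_def by auto
  ultimately show ?thesis
    using that by blast
qed

lemma permutes_agree_on_singleton_fibres:
  assumes "\<forall>a<K. h a < (K::nat)"
  obtains \<delta> where "\<delta> permutes {0..<K}" "\<forall>a<K. (\<forall>a'<K. h a' = h a \<longrightarrow> a' = a) \<longrightarrow> \<delta> a = h a"
proof -
  define S where "S = {a. a < K \<and> (\<forall>a'<a. h a' \<noteq> h a)}"
  have "inj_on h S"
    by (rule linorder_inj_onI) (auto simp: S_def)
  moreover have "S \<subseteq> {0..<K}" "h ` S \<subseteq> {0..<K}"
    using assms by (auto simp: S_def)
  ultimately obtain \<delta> where "\<delta> permutes {0..<K}" "\<forall>a\<in>S. \<delta> a = h a"
    using permutes_extend_inj_on[of "{0..<K}" S h] by blast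
  moreover have "a \<in> S" if "a < K" "\<forall>a'<K. h a' = h a \<longrightarrow> a' = a" for a
    using that less_trans unfolding S_def by blast
  ultimately show ?thesis
    using that by blast
qed

lemma confusion_row_pairs_ge:
  assumes "is_assignment n K \<sigma>" "c < K"
  shows "2 * (real (confusion n \<sigma> \<sigma>0 a c) * (real (comm_size n \<sigma>0 a) - real (confusion n \<sigma> \<sigma>0 a c)))
    \<le> (\<Sum>b<K. real (confusion n \<sigma> \<sigma>0 a b) * (real (comm_size n \<sigma>0 a) - real (confusion n \<sigma> \<sigma>0 a b)))"
  using sum_mult_sum_minus_ge[of "{..<K}" c "\<lambda>b. real (confusion n \<sigma> \<sigma>0 a b)"] assms
    sum_confusion_row[OF assms(1), of \<sigma>0 a]
  by (simp flip: of_nat_sum)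

lemma alpha_cnt_ge_perm_dist_quadratic:
  assumes "0 < \<beta>" "is_assignment n K \<sigma>" "is_assignment n K \<sigma>0"
    and size_lower: "\<forall>a<K. real n / (\<beta> * real K) \<le> real (comm_size n \<sigma>0 a)"
  shows "real n * real (perm_dist n K \<sigma> \<sigma>0) / (real K * \<beta>) - (real (perm_dist n K \<sigma> \<sigma>0))\<^sup>2
    \<le> real (alpha_cnt n \<sigma> \<sigma>0)"
proof -
  define m where "m = perm_dist n K \<sigma> \<sigma>0"
  obtain \<delta> where \<delta>: "\<delta> permutes {0..<K}" "hamming n \<sigma> (\<delta> \<circ> \<sigma>0) = m"
    unfolding m_def by (rule perm_dist_attained)
  define q where "q = real n / (\<beta> * real K)"
  define N where "N a b = real (confusion n \<sigma> \<sigma>0 a b)" for a b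
  define R where "R a = real (comm_size n \<sigma>0 a)" for a
  define E where "E a = R a - N a (\<delta> a)" for a
  have E_sum: "(\<Sum>a<K. E a) = real m"
    using hamming_comp_eq_sum_confusion[OF assms(3), of \<sigma> \<delta>] \<delta>(2)
    unfolding E_def N_def R_def by simp
  have E_nonneg: "0 \<le> E a" for a
    unfolding E_def N_def R_def using confusion_le_comm_size by simp
  have E_le: "E a \<le> real m" if "a < K" for a
    unfolding E_sum[symmetric] using that E_nonneg by (intro member_le_sum) auto
  have row: "2 * (N a (\<delta> a) * E a) \<le> (\<Sum>b<K. N a b * (R a - N a b))" if "a < K" for a
    using permutes_in_image[OF \<delta>(1)] that unfolding E_def N_def R_def
    by (intro confusion_row_pairs_ge[OF assms(2)]) auto
  have diag: "(q - real m) * E a \<le> N a (\<delta> a) * E a" if "a < K" for a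
    using size_lower E_le[OF that] E_nonneg that
    unfolding q_def E_def R_def by (intro mult_right_mono) auto
  have "2 * ((q - real m) * real m) = (\<Sum>a<K. 2 * ((q - real m) * E a))"
    unfolding E_sum[symmetric] by (simp add: sum_distrib_left)
  also have "\<dots> \<le> (\<Sum>a<K. 2 * (N a (\<delta> a) * E a))"
    using diag by (intro sum_mono) auto
  also have "\<dots> \<le> 2 * real (alpha_cnt n \<sigma> \<sigma>0)"
    using row unfolding alpha_cnt_eq_sum_confusion[OF assms(2,3)] N_def R_def by (intro sum_mono) auto
  finally have "(q - real m) * real m \<le> real (alpha_cnt n \<sigma> \<sigma>0)"
    by simp
  moreover have "(q - real m) * real m = real n * real m / (real K * \<beta>) - (real m)\<^sup>2"
    unfolding q_def by (simp add: power2_eq_square algebra_simps)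
  ultimately show ?thesis
    unfolding m_def by simp
qed

lemma ex_majority_label:
  fixes f :: "nat \<Rightarrow> nat \<Rightarrow> 'a::linorder"
  assumes "0 < K"
  obtains h where "\<forall>a. h a < K \<and> (\<forall>b<K. f a b \<le> f a (h a))"
proof -
  have "\<exists>b<K. \<forall>b'<K. f a b' \<le> f a b" for a
  proof -
    have "Max (f a ` {..<K}) \<in> f a ` {..<K}"
      using assms by (intro Max_in) auto
    then obtain b where "b < K" "f a b = Max (f a ` {..<K})"
      by auto
    then show ?thesis
      by (auto intro!: Max_ge)
  qed
  then show ?thesis
    using that by metis
qed

lemma alpha_cnt_ge_majority:
  assumes "is_assignment n K \<sigma>" "is_assignment n K \<sigma>0"
    and "\<forall>a<K. \<forall>b<K. confusion n \<sigma> \<sigma>0 a b \<le> confusion n \<sigma> \<sigma>0 a (h a)"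
    and "\<forall>a<K. q \<le> real (comm_size n \<sigma>0 a)"
  shows "q * (\<Sum>a<K. real (comm_size n \<sigma>0 a) - real (confusion n \<sigma> \<sigma>0 a (h a)))
    \<le> 2 * real (alpha_cnt n \<sigma> \<sigma>0)"
proof -
  define N where "N a b = real (confusion n \<sigma> \<sigma>0 a b)" for a b
  define R where "R a = real (comm_size n \<sigma>0 a)" for a
  have row: "(\<Sum>b<K. N a b) = R a" for a
    unfolding N_def R_def using sum_confusion_row[OF assms(1)] by (simp flip: of_nat_sum)
  have "q * (R a - N a (h a)) \<le> R a * (R a - N a (h a))" if "a < K" for a
    using assms(4) that confusion_le_comm_size[of n \<sigma> \<sigma>0 a "h a"]
    unfolding R_def N_def by (intro mult_right_mono) auto
  then have "q * (\<Sum>a<K. R a - N a (h a)) \<le> (\<Sum>a<K. R a * (R a - N a (h a)))"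
    unfolding sum_distrib_left by (intro sum_mono) auto
  also have "\<dots> = (\<Sum>a<K. \<Sum>b<K. N a b * (R a - N a (h a)))"
    by (simp add: row flip: sum_distrib_right)
  also have "\<dots> \<le> (\<Sum>a<K. \<Sum>b<K. N a b * (R a - N a b))"
    unfolding N_def using assms(3) by (intro sum_mono mult_left_mono) auto
  also have "\<dots> = 2 * real (alpha_cnt n \<sigma> \<sigma>0)"
    unfolding N_def R_def by (rule alpha_cnt_eq_sum_confusion[OF assms(1,2), symmetric])
  finally show ?thesis
    unfolding R_def N_def .
qed

lemma perm_dist_le_errors_add_shared_mass:
  assumes "is_assignment n K \<sigma>0" "\<forall>a<K. h a < K"
  shows "real (perm_dist n K \<sigma> \<sigma>0)
    \<le> (\<Sum>a<K. real (comm_size n \<sigma>0 a) - real (confusion n \<sigma> \<sigma>0 a (h a)))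
      + (\<Sum>a<K. if \<exists>a'<K. a' \<noteq> a \<and> h a' = h a then real (confusion n \<sigma> \<sigma>0 a (h a)) else 0)"
proof -
  define N where "N a b = real (confusion n \<sigma> \<sigma>0 a b)" for a b
  define R where "R a = real (comm_size n \<sigma>0 a)" for a
  define shared where "shared a \<longleftrightarrow> (\<exists>a'<K. a' \<noteq> a \<and> h a' = h a)" for a
  obtain \<delta> where \<delta>: "\<delta> permutes {0..<K}" "\<forall>a<K. (\<forall>a'<K. h a' = h a \<longrightarrow> a' = a) \<longrightarrow> \<delta> a = h a"
    using permutes_agree_on_singleton_fibres[OF assms(2)] by blast
  have error_le: "R a - N a (\<delta> a) \<le> (R a - N a (h a)) + (if shared a then N a (h a) else 0)"
    if "a < K" for a
  proof (cases "shared a")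
    case True
    then show ?thesis
      by (simp add: N_def)
  next
    case False
    then have "\<delta> a = h a"
      using \<delta>(2) that unfolding shared_def by blast
    then show ?thesis
      using False by simp
  qed
  have "real (perm_dist n K \<sigma> \<sigma>0) \<le> real (hamming n \<sigma> (\<delta> \<circ> \<sigma>0))"
    using perm_dist_le_hamming[OF \<delta>(1)] by simp
  also have "\<dots> = (\<Sum>a<K. R a - N a (\<delta> a))"
    unfolding R_def N_def by (rule hamming_comp_eq_sum_confusion[OF assms(1)])
  also have "\<dots> \<le> (\<Sum>a<K. R a - N a (h a)) + (\<Sum>a<K. if shared a then N a (h a) else 0)"
    unfolding sum.distrib[symmetric] using error_le by (intro sum_mono) auto
  finally show ?thesis
    unfolding R_def N_def shared_def .
qed

lemma shared_fibre_mass_tradeoff: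
  assumes "is_assignment n K \<sigma>0" "\<forall>a<K. h a < K"
    and "0 \<le> q" "\<forall>a<K. q \<le> real (comm_size n \<sigma>0 a)" "\<forall>b<K. real (comm_size n \<sigma> b) \<le> u"
    and "0 \<le> t" "t \<le> 1" "t * u \<le> (1 - t) * (2 * q - u)"
  shows "t * (\<Sum>a<K. if \<exists>a'<K. a' \<noteq> a \<and> h a' = h a then real (confusion n \<sigma> \<sigma>0 a (h a)) else 0)
    \<le> (1 - t) * (\<Sum>a<K. real (comm_size n \<sigma>0 a) - real (confusion n \<sigma> \<sigma>0 a (h a)))"
proof -
  define shared where "shared a \<longleftrightarrow> (\<exists>a'<K. a' \<noteq> a \<and> h a' = h a)" for a
  define M where "M a = real (confusion n \<sigma> \<sigma>0 a (h a))" for a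
  define R where "R a = real (comm_size n \<sigma>0 a)" for a
  define A where "A b = {a \<in> {..<K}. h a = b}" for b
  have shared_iff: "shared a \<longleftrightarrow> 2 \<le> card (A b)" if "a \<in> A b" for a b
    using that card_ge_2_iff_ex_other[of "A b" a] unfolding shared_def A_def by auto
  have column: "t * (\<Sum>a\<in>A b. if shared a then M a else 0) \<le> (1 - t) * (\<Sum>a\<in>A b. R a - M a)" for b
  proof (cases "2 \<le> card (A b)")
    case True
    then have "A b \<noteq> {}"
      by auto
    then obtain a where "a \<in> A b"
      by blast
    then have "b < K"
      using assms(2) unfolding A_def by auto
    have "sum M (A b) = real (\<Sum>a\<in>A b. confusion n \<sigma> \<sigma>0 a b)"
      unfolding M_def A_def by simp
    also have "\<dots> \<le> real (comm_size n \<sigma> b)"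
      unfolding of_nat_le_iff by (rule sum_confusion_col_le[OF assms(1)]) (auto simp: A_def)
    also have "\<dots> \<le> u"
      using assms(5) \<open>b < K\<close> by blast
    finally have "t * sum M (A b) \<le> (1 - t) * (\<Sum>a\<in>A b. R a - M a)"
      using True assms(3-8) unfolding R_def A_def by (intro sum_tradeoff_card_ge_2) auto
    moreover have "(\<Sum>a\<in>A b. if shared a then M a else 0) = sum M (A b)"
      using True shared_iff by (intro sum.cong) auto
    ultimately show ?thesis
      by simp
  next
    case False
    have "(\<Sum>a\<in>A b. if shared a then M a else 0) = 0"
      using False shared_iff by (intro sum.neutral) auto
    moreover have "M a \<le> R a" for a
      unfolding M_def R_def by (simp add: confusion_le_comm_size)
    ultimately show ?thesis
      using assms(6,7) by (simp add: sum_nonneg)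
  qed
  have by_fibres: "(\<Sum>a<K. f a) = (\<Sum>b<K. \<Sum>a\<in>A b. f a)" for f :: "nat \<Rightarrow> real"
    unfolding A_def using assms(2) by (intro sum.group[symmetric]) auto
  have "t * (\<Sum>a<K. if shared a then M a else 0) = (\<Sum>b<K. t * (\<Sum>a\<in>A b. if shared a then M a else 0))"
    unfolding by_fibres[of "\<lambda>a. if shared a then M a else 0"] by (rule sum_distrib_left)
  also have "\<dots> \<le> (\<Sum>b<K. (1 - t) * (\<Sum>a\<in>A b. R a - M a))"
    using column by (rule sum_mono)
  also have "\<dots> = (1 - t) * (\<Sum>a<K. R a - M a)"
    unfolding by_fibres[of "\<lambda>a. R a - M a"] by (rule sum_distrib_left[symmetric])
  finally show ?thesis
    unfolding shared_def M_def R_def .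
qed

lemma alpha_cnt_ge_perm_dist_linear:
  assumes "0 < K" "1 \<le> \<beta>" "\<beta> < sqrt (5/3)" "is_assignment n K \<sigma>" "is_assignment n K \<sigma>0"
    and size_upper: "\<forall>b<K. real (comm_size n \<sigma> b) \<le> \<beta> * real n / real K"
    and size_lower: "\<forall>a<K. real n / (\<beta> * real K) \<le> real (comm_size n \<sigma>0 a)"
  shows "c_beta \<beta> * real n * real (perm_dist n K \<sigma> \<sigma>0) / real K \<le> real (alpha_cnt n \<sigma> \<sigma>0)"
proof -
  obtain t where t: "0 \<le> t" "t \<le> 1" "t * \<beta> \<le> (1 - t) * (2 / \<beta> - \<beta>)" "c_beta \<beta> = t / (2 * \<beta>)"
    using c_beta_tradeoff assms(2,3) by blast
  obtain h where h: "\<forall>a. h a < K \<and> (\<forall>b<K. confusion n \<sigma> \<sigma>0 a b \<le> confusion n \<sigma> \<sigma>0 a (h a))"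
    using ex_majority_label[OF assms(1)] by blast
  define q where "q = real n / (\<beta> * real K)"
  define u where "u = \<beta> * real n / real K"
  define E where "E = (\<Sum>a<K. real (comm_size n \<sigma>0 a) - real (confusion n \<sigma> \<sigma>0 a (h a)))"
  define X where "X = (\<Sum>a<K. if \<exists>a'<K. a' \<noteq> a \<and> h a' = h a then real (confusion n \<sigma> \<sigma>0 a (h a)) else 0)"
  have "0 \<le> q"
    unfolding q_def using assms(2) by simp
  have q_E: "q * E \<le> 2 * real (alpha_cnt n \<sigma> \<sigma>0)"
    unfolding E_def q_def using h size_lower by (intro alpha_cnt_ge_majority[OF assms(4,5)]) auto
  have dist_le: "real (perm_dist n K \<sigma> \<sigma>0) \<le> E + X"
    unfolding E_def X_def using h by (intro perm_dist_le_errors_add_shared_mass[OF assms(5)]) auto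
  have "t * u = (t * \<beta>) * (real n / real K)"
    unfolding u_def by simp
  also have "\<dots> \<le> ((1 - t) * (2 / \<beta> - \<beta>)) * (real n / real K)"
    using t(3) by (intro mult_right_mono) auto
  also have "\<dots> = (1 - t) * (2 * q - u)"
    unfolding q_def u_def using assms(1,2) by (simp add: field_simps)
  finally have "t * X \<le> (1 - t) * E"
    unfolding X_def E_def using size_lower size_upper h t(1,2) \<open>0 \<le> q\<close>
    by (intro shared_fibre_mass_tradeoff[OF assms(5)]) (auto simp: q_def u_def)
  then have "t * real (perm_dist n K \<sigma> \<sigma>0) \<le> E"
    using mult_left_mono[OF dist_le t(1)] by (simp add: algebra_simps)
  then have "q * (t * real (perm_dist n K \<sigma> \<sigma>0)) \<le> 2 * real (alpha_cnt n \<sigma> \<sigma>0)"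
    using mult_left_mono[OF _ \<open>0 \<le> q\<close>] q_E by fastforce
  moreover have "2 * (c_beta \<beta> * real n * real (perm_dist n K \<sigma> \<sigma>0) / real K)
      = q * (t * real (perm_dist n K \<sigma> \<sigma>0))"
    unfolding t(4) q_def using assms(1,2) by (simp add: field_simps)
  ultimately show ?thesis
    by linarith
qed

theorem lemma6:
  fixes n K m :: nat and \<beta> :: real and \<sigma> \<sigma>0 :: "nat \<Rightarrow> nat"
  assumes "1 \<le> \<beta>" and "\<beta> < sqrt (5/3)"
    and "K \<ge> 1"
    and "is_assignment n K \<sigma>" and "is_assignment n K \<sigma>0"
    and "\<forall>k<K. real n / (\<beta> * real K) \<le> real (comm_size n \<sigma> k)
                 \<and> real (comm_size n \<sigma> k) \<le> \<beta> * real n / real K"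
    and "\<forall>k<K. real n / (\<beta> * real K) \<le> real (comm_size n \<sigma>0 k)
                 \<and> real (comm_size n \<sigma>0 k) \<le> \<beta> * real n / real K"
    and "perm_dist n K \<sigma> \<sigma>0 = m" and "0 < m" and "m < n"
  shows "real (min (alpha_cnt n \<sigma> \<sigma>0) (gamma_cnt n \<sigma> \<sigma>0)) \<ge>
           (if real m \<le> real n / (2 * real K)
            then real n * real m / (real K * \<beta>) - (real m)\<^sup>2
            else c_beta \<beta> * real n * real m / real K)"
proof -
  have "0 < K" "0 < \<beta>"
    using assms(1,3) by auto
  have dist: "perm_dist n K \<sigma> \<sigma>0 = m" "perm_dist n K \<sigma>0 \<sigma> = m"
    using assms(8) by (simp_all add: perm_dist_commute)
  have "real n * real m / (real K * \<beta>) - (real m)\<^sup>2 \<le> real (alpha_cnt n \<sigma> \<sigma>0)"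
    "real n * real m / (real K * \<beta>) - (real m)\<^sup>2 \<le> real (alpha_cnt n \<sigma>0 \<sigma>)"
    using alpha_cnt_ge_perm_dist_quadratic[OF \<open>0 < \<beta>\<close> assms(4,5)]
      alpha_cnt_ge_perm_dist_quadratic[OF \<open>0 < \<beta>\<close> assms(5,4)] assms(6,7) dist by auto
  moreover have "c_beta \<beta> * real n * real m / real K \<le> real (alpha_cnt n \<sigma> \<sigma>0)"
    "c_beta \<beta> * real n * real m / real K \<le> real (alpha_cnt n \<sigma>0 \<sigma>)"
    using alpha_cnt_ge_perm_dist_linear[OF \<open>0 < K\<close> assms(1,2,4,5)]
      alpha_cnt_ge_perm_dist_linear[OF \<open>0 < K\<close> assms(1,2,5,4)] assms(6,7) dist by auto
  ultimately show ?thesis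
    unfolding gamma_cnt_eq_alpha_cnt_swap by (simp add: min_def)
qed

end
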